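(* Let $A=A_{\bar 0}\oplus A_{\bar 1}$ be a finite-dimensional associative superalgebra over an algebraically closed field $\mathbb{K}$ of characteristic zero. Then $A$ admits an even-symmetric structure if and only if there exist two isomorphisms of $A_{\bar 0}$-bimodules $\phi_{\bar 0}:A_{\bar 0}\to A_{\bar 0}^*$ and $\phi_{\bar 1}:A_{\bar 1}\to A_{\bar 1}^*$ such that $$\phi_i(x)(y)=(-1)^i\phi_i(y)(x)\quad\text{for all } x,y\in A_i,\ i\in\{\bar 0,\bar 1\},$$ $$\phi_{\bar 1}(x.y)(z)=\phi_{\bar 0}(x)(y.z)\quad\text{for all } x\in A_{\bar 0},\ y,z\in A_{\bar 1}.$$
   Context: A superalgebra is a $\mathbb{Z}_2$-graded algebra $A=A_{\bar 0}\oplus A_{\bar 1}$ with $A_\alpha A_\beta\subseteq A_{\alpha+\beta}$; it is associative if it is associative as an algebra; $|x|$ denotes the degree of a homogeneous element $x$. A bilinear form $B$ on $A$ is even if $B(A_{\bar 0},A_{\bar 1})=\{0\}$ (so also $B(A_{\bar 1},A_{\bar 0})=\{0\}$), and odd if $B(A_{\bar 0},A_{\bar 0})=B(A_{\bar 1},A_{\bar 1})=\{0\}$. $B$ is supersymmetric if $B(x,y)=(-1)^{|x||y|}B(y,x)$ for homogeneous $x,y$, associative if $B(x.y,z)=B(x,y.z)$ for all $x,y,z$, and non-degenerate if $B(x,A)=\{0\}$ implies $x=0$. An even-symmetric (resp. odd-symmetric) structure on $A$ is an even (resp. odd), supersymmetric, associative, non-degenerate bilinear form on $A$. For $i\in\{\bar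 0,\bar 1\}$, $A_i$ is an $A_{\bar 0}$-bimodule via left and right multiplication, and $A_i^*$ is an $A_{\bar 0}$-bimodule via $(x\cdot f)(y)=f(y.x)$ and $(f\cdot x)(y)=f(x.y)$ for $x\in A_{\bar 0}$, $f\in A_i^*$, $y\in A_i$. In the formula $(-1)^i$, $i$ is read as $0$ or $1$. *)

theory Defs
  imports "HOL-Computational_Algebra.Polynomial"
begin

definition alg_closed :: "'k::field itself \<Rightarrow> bool" where
  "alg_closed _ \<longleftrightarrow> (\<forall>p::'k poly. degree p > 0 \<longrightarrow> (\<exists>x. poly p x = 0))"

definition fin_dim :: "('k::field \<Rightarrow> 'a::ab_group_add \<Rightarrow> 'a) \<Rightarrow> bool" where
  "fin_dim scal \<longleftrightarrow> vector_space scal \<and> (\<exists>B. finite B \<and> module.span scal B = UNIV)"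

definition assoc_superalgebra ::
  "('k::field \<Rightarrow> 'a::ab_group_add \<Rightarrow> 'a) \<Rightarrow> ('a \<Rightarrow> 'a \<Rightarrow> 'a) \<Rightarrow> 'a set \<Rightarrow> 'a set \<Rightarrow> bool" where
  "assoc_superalgebra scal mul A0 A1 \<longleftrightarrow>
     vector_space scal \<and>
     (\<forall>x y z. mul (x + y) z = mul x z + mul y z) \<and>
     (\<forall>x y z. mul x (y + z) = mul x y + mul x z) \<and>
     (\<forall>c x y. mul (scal c x) y = scal c (mul x y)) \<and>
     (\<forall>c x y. mul x (scal c y) = scal c (mul x y)) \<and>
     (\<forall>x y z. mul (mul x y) z = mul x (mul y z)) \<and>
     module.subspace scal A0 \<and> module.subspace scal A1 \<and>
     A0 \<inter> A1 = {0} \<and> (\<forall>x. \<exists>a\<in>A0. \<exists>b\<in>A1. x = a + b) \<and>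
     (\<forall>x\<in>A0. \<forall>y\<in>A0. mul x y \<in> A0) \<and>
     (\<forall>x\<in>A0. \<forall>y\<in>A1. mul x y \<in> A1) \<and>
     (\<forall>x\<in>A1. \<forall>y\<in>A0. mul x y \<in> A1) \<and>
     (\<forall>x\<in>A1. \<forall>y\<in>A1. mul x y \<in> A0)"

definition even_symmetric_structure ::
  "('k::field \<Rightarrow> 'a::ab_group_add \<Rightarrow> 'a) \<Rightarrow> ('a \<Rightarrow> 'a \<Rightarrow> 'a) \<Rightarrow> 'a set \<Rightarrow> 'a set
     \<Rightarrow> ('a \<Rightarrow> 'a \<Rightarrow> 'k) \<Rightarrow> bool" where
  "even_symmetric_structure scal mul A0 A1 B \<longleftrightarrow>
     \<comment> \<open>bilinear\<close>
     (\<forall>x y z. B (x + y) z = B x z + B y z) \<and>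
     (\<forall>x y z. B x (y + z) = B x y + B x z) \<and>
     (\<forall>c x y. B (scal c x) y = c * B x y) \<and>
     (\<forall>c x y. B x (scal c y) = c * B x y) \<and>
     \<comment> \<open>even\<close>
     (\<forall>x\<in>A0. \<forall>y\<in>A1. B x y = 0) \<and>
     (\<forall>x\<in>A1. \<forall>y\<in>A0. B x y = 0) \<and>
     \<comment> \<open>supersymmetric (on homogeneous elements)\<close>
     (\<forall>x\<in>A0. \<forall>y\<in>A0 \<union> A1. B x y = B y x) \<and>
     (\<forall>x\<in>A1. \<forall>y\<in>A0. B x y = B y x) \<and>
     (\<forall>x\<in>A1. \<forall>y\<in>A1. B x y = - B y x) \<and>
     \<comment> \<open>associative\<close>
     (\<forall>x y z. B (mul x y) z = B x (mul y z)) \<and>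
     \<comment> \<open>non-degenerate\<close>
     (\<forall>x. (\<forall>y. B x y = 0) \<longrightarrow> x = 0)"

text \<open>f is a linear functional on the subspace S (an element of S^*, represented by
  its values on S).\<close>
definition lin_functional_on ::
  "('k::field \<Rightarrow> 'a::ab_group_add \<Rightarrow> 'a) \<Rightarrow> 'a set \<Rightarrow> ('a \<Rightarrow> 'k) \<Rightarrow> bool" where
  "lin_functional_on scal S f \<longleftrightarrow>
     (\<forall>x\<in>S. \<forall>y\<in>S. f (x + y) = f x + f y) \<and> (\<forall>c. \<forall>x\<in>S. f (scal c x) = c * f x)"

text \<open>phi : Ai \<rightarrow> Ai^* is an isomorphism of A0-bimodules, where Ai^* carries the actions
  (x.f)(y) = f(y.x) and (f.x)(y) = f(x.y).  Elements of Ai^* are identified with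
  their restrictions to Ai.\<close>
definition bimodule_iso_to_dual ::
  "('k::field \<Rightarrow> 'a::ab_group_add \<Rightarrow> 'a) \<Rightarrow> ('a \<Rightarrow> 'a \<Rightarrow> 'a) \<Rightarrow> 'a set \<Rightarrow> 'a set
     \<Rightarrow> ('a \<Rightarrow> 'a \<Rightarrow> 'k) \<Rightarrow> bool" where
  "bimodule_iso_to_dual scal mul A0 Ai phi \<longleftrightarrow>
     \<comment> \<open>well-defined into Ai^*\<close>
     (\<forall>x\<in>Ai. lin_functional_on scal Ai (phi x)) \<and>
     \<comment> \<open>linear\<close>
     (\<forall>x\<in>Ai. \<forall>y\<in>Ai. \<forall>z\<in>Ai. phi (x + y) z = phi x z + phi y z) \<and>
     (\<forall>c. \<forall>x\<in>Ai. \<forall>z\<in>Ai. phi (scal c x) z = c * phi x z) \<and>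
     \<comment> \<open>injective\<close>
     (\<forall>x\<in>Ai. (\<forall>z\<in>Ai. phi x z = 0) \<longrightarrow> x = 0) \<and>
     \<comment> \<open>surjective onto Ai^*\<close>
     (\<forall>f. lin_functional_on scal Ai f \<longrightarrow> (\<exists>x\<in>Ai. \<forall>z\<in>Ai. phi x z = f z)) \<and>
     \<comment> \<open>A0-bimodule map\<close>
     (\<forall>a\<in>A0. \<forall>x\<in>Ai. \<forall>y\<in>Ai. phi (mul a x) y = phi x (mul y a)) \<and>
     (\<forall>a\<in>A0. \<forall>x\<in>Ai. \<forall>y\<in>Ai. phi (mul x a) y = phi x (mul a y))"

end

theory Submission
  imports Defs
begin

text \<open>
  Given an even-symmetric structure \<open>B\<close>, its restrictions to \<open>A\<^sub>0\<close> and \<open>A\<^sub>1\<close>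
  are the required maps.  Since \<open>B\<close> is even, it stays nondegenerate on each homogeneous part,
  which gives injectivity, and finite dimension then gives surjectivity; the bimodule
  identities come from associativity of \<open>B\<close> combined with its supersymmetry.
  Conversely, from \<open>\<phi>\<^sub>0, \<phi>\<^sub>1\<close> one defines \<open>B(x, y) = \<phi>\<^sub>0(x\<^sub>0)(y\<^sub>0) + \<phi>\<^sub>1(x\<^sub>1)(y\<^sub>1)\<close>
  on homogeneous components.  Of the mixed components of associativity, all but
  \<open>B(x\<^sub>1 y\<^sub>1, z\<^sub>0) = B(x\<^sub>1, y\<^sub>1 z\<^sub>0)\<close> are the right-module property or the compatibility
  condition; that one follows from the compatibility condition by moving \<open>z\<^sub>0\<close> around
  with the symmetry of \<open>\<phi>\<^sub>0\<close> and the antisymmetry of \<open>\<phi>\<^sub>1\<close>.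
\<close>

context vector_space begin

lemma lin_functional_on_zero: "lin_functional_on scale S g \<Longrightarrow> 0 \<in> S \<Longrightarrow> g 0 = 0"
  unfolding lin_functional_on_def by (metis mult_zero_left scale_zero_left)

lemma lin_functional_on_eq_on_span:
  assumes S: "subspace S" and Bs: "Bs \<subseteq> S" "span Bs = S"
    and g: "lin_functional_on scale S g" and h: "lin_functional_on scale S h"
    and eq: "\<forall>b\<in>Bs. g b = h b" and z: "z \<in> S"
  shows "g z = h z"
proof -
  have "subspace {z \<in> S. g z = h z}"
    using lin_functional_on_zero[OF g] lin_functional_on_zero[OF h] S g h
    unfolding subspace_def lin_functional_on_def by auto
  have "z \<in> span Bs" using z Bs by simp
  then have "z \<in> {z \<in> S. g z = h z}"
    by (rule span_induct) (use \<open>subspace {z \<in> S. g z = h z}\<close> Bs eq in auto)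
  then show ?thesis by simp
qed

lemma independent_coefficients_eq:
  assumes "finite Bs" "independent Bs"
    and "(\<Sum>b\<in>Bs. u b *s b) = (\<Sum>b\<in>Bs. v b *s b)" and "b \<in> Bs"
  shows "u b = v b"
proof -
  have "(\<Sum>b\<in>Bs. (u b - v b) *s b) = 0"
    using assms(3) by (simp add: scale_left_diff_distrib sum_subtractf)
  then have "u b - v b = 0"
    using independentD[OF assms(2,1) order_refl _ assms(4), of "\<lambda>b. u b - v b"] by simp
  then show ?thesis by simp
qed

end

context finite_dimensional_vector_space begin

text \<open>
  Writing \<open>L x = \<Sum>\<^sub>b Bf x b \<cdot> b\<close> over a basis of \<open>S\<close>, the map \<open>L\<close>
  is an injective linear endomorphism of \<open>S\<close>, hence onto \<open>S\<close>; a preimage of \<open>\<Sum>\<^sub>b f b \<cdot> b\<close>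
  represents \<open>f\<close>.
\<close>
lemma nondegenerate_pairing_onto_dual:
  assumes S: "subspace S"
    and add_left: "\<And>x y z. Bf (x + y) z = Bf x z + Bf y z"
    and scale_left: "\<And>c x z. Bf (c *s x) z = c * Bf x z"
    and lin_right: "\<forall>x\<in>S. lin_functional_on scale S (Bf x)"
    and nondeg: "\<forall>x\<in>S. (\<forall>z\<in>S. Bf x z = 0) \<longrightarrow> x = 0"
    and f: "lin_functional_on scale S f"
  shows "\<exists>x\<in>S. \<forall>z\<in>S. Bf x z = f z"
proof -
  obtain Bs where Bs: "finite Bs" "Bs \<subseteq> S" "independent Bs" "span Bs = S"
    using basis_subspace_exists[OF S] by metis
  have agree: "\<forall>z\<in>S. Bf x z = g z"
    if "x \<in> S" "lin_functional_on scale S g" "(\<Sum>b\<in>Bs. Bf x b *s b) = (\<Sum>b\<in>Bs. g b *s b)"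
    for x g
  proof -
    have "\<forall>b\<in>Bs. Bf x b = g b"
      using independent_coefficients_eq[OF Bs(1,3) that(3)] by blast
    then show ?thesis
      using lin_functional_on_eq_on_span[OF S Bs(2,4)] lin_right that(1,2) by blast
  qed
  define L where "L x = (\<Sum>b\<in>Bs. Bf x b *s b)" for x
  interpret L: Vector_Spaces.linear scale scale L
    unfolding Vector_Spaces.linear_iff L_def
    by (auto simp: vector_space_axioms add_left scale_left scale_left_distrib sum.distrib
        scale_sum_right)
  have in_S: "(\<Sum>b\<in>Bs. g b *s b) \<in> S" for g
    using Bs S by (auto intro!: subspace_sum subspace_scale)
  have "inj_on L S"
  proof (rule inj_onI)
    fix x y assume xy: "x \<in> S" "y \<in> S" "L x = L y"
    have "x - y \<in> S" using xy S subspace_diff by blast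
    moreover have "L (x - y) = (\<Sum>b\<in>Bs. (\<lambda>_. 0) b *s b)" using xy by (simp add: L.diff)
    moreover have "lin_functional_on scale S (\<lambda>_. 0)" by (simp add: lin_functional_on_def)
    ultimately have "\<forall>z\<in>S. Bf (x - y) z = 0" using agree[of "x - y" "\<lambda>_. 0"] unfolding L_def by simp
    then show "x = y" using nondeg \<open>x - y \<in> S\<close> by auto
  qed
  then have "dim (L ` S) = dim S"
    using finite_dimensional_vector_space_pair_1.dim_image_eq[of scale Basis scale L S] S
    by (simp add: finite_dimensional_vector_space_pair_1_def finite_dimensional_vector_space_axioms
        L.linear_axioms vector_space_axioms span_eq_iff[THEN iffD2, OF S])
  moreover have "L ` S \<subseteq> S" unfolding L_def using in_S by blast
  ultimately have "L ` S = S"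
    using subspace_dim_equal[of "L ` S" S] L.subspace_image[OF S] S by simp
  then obtain x where "x \<in> S" "L x = (\<Sum>b\<in>Bs. f b *s b)" using in_S by (metis imageE)
  then show ?thesis using agree[OF _ f] unfolding L_def by blast
qed

end

lemma finite_dimensional_vector_space_if_fin_dim:
  assumes "fin_dim scal"
  obtains Basis where "finite_dimensional_vector_space scal Basis"
proof -
  interpret vector_space scal using assms unfolding fin_dim_def by auto
  obtain Bs where Bs: "finite Bs" "span Bs = UNIV" using assms unfolding fin_dim_def by auto
  obtain Bi where Bi: "Bi \<subseteq> Bs" "independent Bi" "Bs \<subseteq> span Bi"
    using maximal_independent_subset[of Bs] by blast
  have "span Bi = UNIV" using span_mono[OF Bi(3)] Bs(2) span_span[of Bi] by auto
  moreover have "finite Bi" using Bi(1) Bs(1) finite_subset by blast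
  ultimately have "finite_dimensional_vector_space scal Bi"
    using Bi(2) by unfold_locales auto
  then show thesis by (rule that)
qed

lemma bimodule_iso_to_dual_bilinear:
  assumes "bimodule_iso_to_dual scal mul A0 S phi" and "x \<in> S" "y \<in> S" "z \<in> S"
  shows "phi (x + y) z = phi x z + phi y z" and "phi x (y + z) = phi x y + phi x z"
    and "phi (scal c x) z = c * phi x z" and "phi x (scal c z) = c * phi x z"
  using assms by (auto simp: bimodule_iso_to_dual_def lin_functional_on_def)

lemma bimodule_iso_to_dual_zero:
  assumes "bimodule_iso_to_dual scal mul A0 S phi" and "0 \<in> S" "x \<in> S"
  shows "phi 0 x = 0" and "phi x 0 = 0"
  using bimodule_iso_to_dual_bilinear(1,2)[OF assms(1,2,2,3)]
    bimodule_iso_to_dual_bilinear(1,2)[OF assms(1,3,2,2)]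
  by (metis add.right_neutral add_left_cancel)+

lemma bimodule_iso_to_dual_mul_right:
  assumes "bimodule_iso_to_dual scal mul A0 S phi" and "a \<in> A0" "x \<in> S" "y \<in> S"
  shows "phi (mul x a) y = phi x (mul a y)"
  using assms unfolding bimodule_iso_to_dual_def by blast

lemma bimodule_iso_to_dual_injective:
  assumes "bimodule_iso_to_dual scal mul A0 S phi" and "x \<in> S" "\<forall>z\<in>S. phi x z = 0"
  shows "x = 0"
  using assms unfolding bimodule_iso_to_dual_def by blast

locale graded_vector_space = vector_space +
  fixes A0 A1 :: "'b set"
  assumes subspace_even: "subspace A0" and subspace_odd: "subspace A1"
    and even_inter_odd: "A0 \<inter> A1 = {0}"
    and even_plus_odd_exists: "\<exists>a\<in>A0. \<exists>b\<in>A1. x = a + b"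
begin

definition even_part :: "'b \<Rightarrow> 'b" where
  "even_part x = (THE a. a \<in> A0 \<and> x - a \<in> A1)"

definition odd_part :: "'b \<Rightarrow> 'b" where
  "odd_part x = x - even_part x"

lemma zero_even: "0 \<in> A0" and zero_odd: "0 \<in> A1"
  using subspace_even subspace_odd subspace_0 by auto

lemma even_part_eqI:
  assumes a: "a \<in> A0" and xa: "x - a \<in> A1"
  shows "even_part x = a"
  unfolding even_part_def
proof (rule the_equality)
  fix a' assume a': "a' \<in> A0 \<and> x - a' \<in> A1"
  have "a' - a = (x - a) - (x - a')" by (simp add: algebra_simps)
  moreover have "(x - a) - (x - a') \<in> A1" using a' xa subspace_diff[OF subspace_odd] by blast
  ultimately have "a' - a \<in> A0 \<inter> A1" using a a' subspace_diff[OF subspace_even] by auto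
  then show "a' = a" using even_inter_odd by simp
qed (use assms in simp)

lemma even_part_in: "even_part x \<in> A0" and odd_part_in: "odd_part x \<in> A1"
proof -
  obtain a b where "a \<in> A0" "b \<in> A1" "x = a + b" using even_plus_odd_exists by blast
  then have "even_part x = a" "odd_part x = b"
    using even_part_eqI[of a x] unfolding odd_part_def by simp_all
  with \<open>a \<in> A0\<close> \<open>b \<in> A1\<close> show "even_part x \<in> A0" "odd_part x \<in> A1" by simp_all
qed

lemma even_plus_odd_part: "even_part x + odd_part x = x"
  by (simp add: odd_part_def)

lemma even_part_even: "x \<in> A0 \<Longrightarrow> even_part x = x"
  and even_part_odd: "x \<in> A1 \<Longrightarrow> even_part x = 0"
  and odd_part_even: "x \<in> A0 \<Longrightarrow> odd_part x = 0"
  and odd_part_odd: "x \<in> A1 \<Longrightarrow> odd_part x = x"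
  using even_part_eqI[of x x] even_part_eqI[of 0 x] zero_even zero_odd
  by (simp_all add: odd_part_def)

lemma even_part_add: "even_part (x + y) = even_part x + even_part y"
proof (rule even_part_eqI)
  show "even_part x + even_part y \<in> A0"
    using even_part_in subspace_add[OF subspace_even] by blast
  have "x + y - (even_part x + even_part y) = odd_part x + odd_part y"
    by (simp add: odd_part_def algebra_simps)
  then show "x + y - (even_part x + even_part y) \<in> A1"
    using odd_part_in subspace_add[OF subspace_odd] by metis
qed

lemma odd_part_add: "odd_part (x + y) = odd_part x + odd_part y"
  by (simp add: odd_part_def even_part_add algebra_simps)

lemma even_part_scale: "even_part (c *s x) = c *s even_part x"
proof (rule even_part_eqI)
  show "c *s even_part x \<in> A0" using even_part_in subspace_scale[OF subspace_even] by blast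
  have "c *s x - c *s even_part x = c *s odd_part x"
    by (simp add: odd_part_def scale_right_diff_distrib)
  then show "c *s x - c *s even_part x \<in> A1"
    using odd_part_in subspace_scale[OF subspace_odd] by metis
qed

lemma odd_part_scale: "odd_part (c *s x) = c *s odd_part x"
  by (simp add: odd_part_def even_part_scale scale_right_diff_distrib)

end

text \<open>
  Only biadditivity and the grading of the product are needed below.
\<close>
locale graded_product = graded_vector_space +
  fixes mul :: "'b \<Rightarrow> 'b \<Rightarrow> 'b"
  assumes mul_add_left: "mul (x + y) z = mul x z + mul y z"
    and mul_add_right: "mul x (y + z) = mul x y + mul x z"
    and mul_even_even: "x \<in> A0 \<Longrightarrow> y \<in> A0 \<Longrightarrow> mul x y \<in> A0"
    and mul_even_odd: "x \<in> A0 \<Longrightarrow> y \<in> A1 \<Longrightarrow> mul x y \<in> A1"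
    and mul_odd_even: "x \<in> A1 \<Longrightarrow> y \<in> A0 \<Longrightarrow> mul x y \<in> A1"
    and mul_odd_odd: "x \<in> A1 \<Longrightarrow> y \<in> A1 \<Longrightarrow> mul x y \<in> A0"
begin

lemma mul_homogeneous_parts:
  "mul x y = (mul (even_part x) (even_part y) + mul (odd_part x) (odd_part y))
     + (mul (even_part x) (odd_part y) + mul (odd_part x) (even_part y))"
proof -
  have "mul x y = mul (even_part x + odd_part x) (even_part y + odd_part y)"
    by (simp only: even_plus_odd_part)
  then show ?thesis by (simp add: mul_add_left mul_add_right algebra_simps)
qed

lemma even_part_mul:
  "even_part (mul x y) = mul (even_part x) (even_part y) + mul (odd_part x) (odd_part y)"
proof (rule even_part_eqI)
  show "mul (even_part x) (even_part y) + mul (odd_part x) (odd_part y) \<in> A0"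
    by (intro subspace_add[OF subspace_even] mul_even_even mul_odd_odd even_part_in odd_part_in)
  have "mul x y - (mul (even_part x) (even_part y) + mul (odd_part x) (odd_part y))
      = mul (even_part x) (odd_part y) + mul (odd_part x) (even_part y)"
    by (subst mul_homogeneous_parts) (rule add_diff_cancel_left')
  then show "mul x y - (mul (even_part x) (even_part y) + mul (odd_part x) (odd_part y)) \<in> A1"
    by (simp only:)
      (intro subspace_add[OF subspace_odd] mul_even_odd mul_odd_even even_part_in odd_part_in)
qed

lemma odd_part_mul:
  "odd_part (mul x y) = mul (even_part x) (odd_part y) + mul (odd_part x) (even_part y)"
  unfolding odd_part_def[of "mul x y"] even_part_mul
  by (subst mul_homogeneous_parts) (rule add_diff_cancel_left')

end

lemma graded_product_if_assoc_superalgebra: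
  "assoc_superalgebra scal mul A0 A1 \<Longrightarrow> graded_product scal A0 A1 mul"
  unfolding assoc_superalgebra_def graded_product_def graded_product_axioms_def
    graded_vector_space_def graded_vector_space_axioms_def
  by auto

locale even_symmetric_form = graded_product +
  fixes B :: "'b \<Rightarrow> 'b \<Rightarrow> 'a"
  assumes form_add_left: "B (x + y) z = B x z + B y z"
    and form_add_right: "B x (y + z) = B x y + B x z"
    and form_scale_left: "B (c *s x) y = c * B x y"
    and form_scale_right: "B x (c *s y) = c * B x y"
    and form_even_odd: "x \<in> A0 \<Longrightarrow> y \<in> A1 \<Longrightarrow> B x y = 0"
    and form_odd_even: "x \<in> A1 \<Longrightarrow> y \<in> A0 \<Longrightarrow> B x y = 0"
    and form_even_sym: "x \<in> A0 \<Longrightarrow> y \<in> A0 \<Longrightarrow> B x y = B y x"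
    and form_odd_antisym: "x \<in> A1 \<Longrightarrow> y \<in> A1 \<Longrightarrow> B x y = - B y x"
    and form_assoc: "B (mul x y) z = B x (mul y z)"
    and form_nondegenerate: "(\<And>y. B x y = 0) \<Longrightarrow> x = 0"
begin

lemma form_nondegenerate_on:
  assumes S: "S \<in> {A0, A1}" and x: "x \<in> S" and vanish: "\<forall>z\<in>S. B x z = 0"
  shows "x = 0"
proof (rule form_nondegenerate)
  fix y
  have "B x y = B x (even_part y) + B x (odd_part y)"
    by (simp only: form_add_right[symmetric] even_plus_odd_part)
  also have "\<dots> = 0"
    using S x vanish even_part_in odd_part_in form_even_odd form_odd_even by auto
  finally show "B x y = 0" .
qed

lemma form_mul_left:
  assumes S: "S \<in> {A0, A1}" and a: "a \<in> A0" and x: "x \<in> S" and y: "y \<in> S"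
  shows "B (mul a x) y = B x (mul y a)"
proof (cases "S = A0")
  case True
  then have "B (mul a x) y = B y (mul a x)" using a x y by (simp add: form_even_sym mul_even_even)
  also have "\<dots> = B (mul y a) x" by (rule form_assoc[symmetric])
  also have "\<dots> = B x (mul y a)" using True a x y by (simp add: form_even_sym mul_even_even)
  finally show ?thesis .
next
  case False
  then have odd: "S = A1" using S by blast
  have "B (mul a x) y = - B y (mul a x)"
    using odd a x y by (simp add: form_odd_antisym[of "mul a x" y] mul_even_odd)
  also have "\<dots> = - B (mul y a) x" by (simp only: form_assoc)
  also have "\<dots> = B x (mul y a)"
    using odd a x y by (simp add: form_odd_antisym[of x "mul y a"] mul_odd_even)
  finally show ?thesis .
qed

lemma bimodule_iso_to_dual_form:
  assumes fd: "fin_dim scale" and S: "S \<in> {A0, A1}"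
  shows "bimodule_iso_to_dual scale mul A0 S B"
proof -
  obtain Basis where fdvs: "finite_dimensional_vector_space scale Basis"
    using fd by (rule finite_dimensional_vector_space_if_fin_dim)
  have subspace: "subspace S" using S subspace_even subspace_odd by blast
  have lin: "lin_functional_on scale S (B x)" for x
    by (simp add: lin_functional_on_def form_add_right form_scale_right)
  have nondeg: "\<forall>x\<in>S. (\<forall>z\<in>S. B x z = 0) \<longrightarrow> x = 0"
    using form_nondegenerate_on[OF S] by blast
  show ?thesis
    unfolding bimodule_iso_to_dual_def
  proof (intro conjI ballI allI impI)
    fix f assume "lin_functional_on scale S f"
    with lin show "\<exists>x\<in>S. \<forall>z\<in>S. B x z = f z"
      using finite_dimensional_vector_space.nondegenerate_pairing_onto_dual
          [OF fdvs subspace form_add_left form_scale_left _ nondeg] by blast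
  next
    fix a x y assume "a \<in> A0" "x \<in> S" "y \<in> S"
    then show "B (mul a x) y = B x (mul y a)" by (rule form_mul_left[OF S])
  qed (use lin nondeg in \<open>simp_all add: form_add_left form_scale_left form_assoc\<close>)
qed

end

lemma (in graded_product) even_symmetric_form_if_even_symmetric_structure:
  assumes "even_symmetric_structure scale mul A0 A1 B"
  shows "even_symmetric_form scale A0 A1 mul B"
  using assms unfolding even_symmetric_structure_def
  by unfold_locales (elim conjE; meson UnI1)+

locale compatible_dualities = graded_product +
  fixes phi0 phi1 :: "'b \<Rightarrow> 'b \<Rightarrow> 'a"
  assumes iso_even: "bimodule_iso_to_dual scale mul A0 A0 phi0"
    and iso_odd: "bimodule_iso_to_dual scale mul A0 A1 phi1"
    and phi0_sym: "x \<in> A0 \<Longrightarrow> y \<in> A0 \<Longrightarrow> phi0 x y = phi0 y x"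
    and phi1_antisym: "x \<in> A1 \<Longrightarrow> y \<in> A1 \<Longrightarrow> phi1 x y = - phi1 y x"
    and phi_compat: "x \<in> A0 \<Longrightarrow> y \<in> A1 \<Longrightarrow> z \<in> A1 \<Longrightarrow> phi1 (mul x y) z = phi0 x (mul y z)"
begin

definition graded_form :: "'b \<Rightarrow> 'b \<Rightarrow> 'a" where
  "graded_form x y = phi0 (even_part x) (even_part y) + phi1 (odd_part x) (odd_part y)"

lemmas phi0_bilinear =
  bimodule_iso_to_dual_bilinear[OF iso_even even_part_in even_part_in even_part_in]
lemmas phi1_bilinear =
  bimodule_iso_to_dual_bilinear[OF iso_odd odd_part_in odd_part_in odd_part_in]

lemma graded_form_even_right: "y \<in> A0 \<Longrightarrow> graded_form x y = phi0 (even_part x) y"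
  and graded_form_odd_right: "y \<in> A1 \<Longrightarrow> graded_form x y = phi1 (odd_part x) y"
  unfolding graded_form_def
  using bimodule_iso_to_dual_zero[OF iso_even zero_even even_part_in]
    bimodule_iso_to_dual_zero[OF iso_odd zero_odd odd_part_in]
  by (simp_all add: even_part_even odd_part_even even_part_odd odd_part_odd)

lemma graded_form_even: "x \<in> A0 \<Longrightarrow> y \<in> A0 \<Longrightarrow> graded_form x y = phi0 x y"
  and graded_form_odd: "x \<in> A1 \<Longrightarrow> y \<in> A1 \<Longrightarrow> graded_form x y = phi1 x y"
  and graded_form_even_odd: "x \<in> A0 \<Longrightarrow> y \<in> A1 \<Longrightarrow> graded_form x y = 0"
  and graded_form_odd_even: "x \<in> A1 \<Longrightarrow> y \<in> A0 \<Longrightarrow> graded_form x y = 0"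
  using bimodule_iso_to_dual_zero[OF iso_even zero_even] bimodule_iso_to_dual_zero[OF iso_odd zero_odd]
  by (simp_all add: graded_form_even_right graded_form_odd_right even_part_even odd_part_even
      even_part_odd odd_part_odd)

lemma phi0_mul_odd_odd:
  assumes x: "x \<in> A1" and y: "y \<in> A1" and z: "z \<in> A0"
  shows "phi0 (mul x y) z = phi1 x (mul y z)"
proof -
  have "phi0 (mul x y) z = phi0 z (mul x y)" using x y z by (simp add: phi0_sym mul_odd_odd)
  also have "\<dots> = phi1 (mul z x) y" using x y z by (simp add: phi_compat)
  also have "\<dots> = - phi1 y (mul z x)" using x y z by (simp add: phi1_antisym[of _ y] mul_even_odd)
  also have "\<dots> = - phi1 (mul y z) x"
    using x y z by (simp add: bimodule_iso_to_dual_mul_right[OF iso_odd])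
  also have "\<dots> = phi1 x (mul y z)" using x y z by (simp add: phi1_antisym[of x] mul_odd_even)
  finally show ?thesis .
qed

lemma graded_form_assoc: "graded_form (mul x y) z = graded_form x (mul y z)"
proof -
  define x0 y0 z0 x1 y1 z1 where "x0 = even_part x" and "y0 = even_part y" and "z0 = even_part z"
    and "x1 = odd_part x" and "y1 = odd_part y" and "z1 = odd_part z"
  have hom: "x0 \<in> A0" "y0 \<in> A0" "z0 \<in> A0" "x1 \<in> A1" "y1 \<in> A1" "z1 \<in> A1"
    unfolding x0_def y0_def z0_def x1_def y1_def z1_def by (simp_all add: even_part_in odd_part_in)
  have "graded_form (mul x y) z
      = phi0 (mul x0 y0) z0 + phi0 (mul x1 y1) z0 + (phi1 (mul x0 y1) z1 + phi1 (mul x1 y0) z1)"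
    unfolding graded_form_def even_part_mul odd_part_mul x0_def y0_def z0_def x1_def y1_def z1_def
    using bimodule_iso_to_dual_bilinear(1)[OF iso_even] bimodule_iso_to_dual_bilinear(1)[OF iso_odd]
    by (simp add: even_part_in odd_part_in mul_even_even mul_odd_odd mul_even_odd mul_odd_even)
  also have "\<dots> = phi0 x0 (mul y0 z0) + phi1 x1 (mul y1 z0) + (phi0 x0 (mul y1 z1) + phi1 x1 (mul y0 z1))"
    using hom by (simp add: bimodule_iso_to_dual_mul_right[OF iso_even]
        bimodule_iso_to_dual_mul_right[OF iso_odd] phi_compat phi0_mul_odd_odd)
  also have "\<dots> = graded_form x (mul y z)"
    unfolding graded_form_def even_part_mul odd_part_mul x0_def y0_def z0_def x1_def y1_def z1_def
    using bimodule_iso_to_dual_bilinear(2)[OF iso_even] bimodule_iso_to_dual_bilinear(2)[OF iso_odd]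
    by (simp add: even_part_in odd_part_in mul_even_even mul_odd_odd mul_even_odd mul_odd_even)
  finally show ?thesis .
qed

lemma graded_form_nondegenerate:
  assumes vanish: "\<And>y. graded_form x y = 0"
  shows "x = 0"
proof -
  have "even_part x = 0"
    using bimodule_iso_to_dual_injective[OF iso_even even_part_in] vanish graded_form_even_right
    by metis
  moreover have "odd_part x = 0"
    using bimodule_iso_to_dual_injective[OF iso_odd odd_part_in] vanish graded_form_odd_right
    by metis
  ultimately show ?thesis using even_plus_odd_part[of x] by simp
qed

lemma even_symmetric_structure_graded_form:
  "even_symmetric_structure scale mul A0 A1 graded_form"
  unfolding even_symmetric_structure_def
proof (intro conjI allI ballI impI)
  fix x y assume "x \<in> A0" "y \<in> A0 \<union> A1"
  then show "graded_form x y = graded_form y x"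
    by (auto simp: graded_form_even graded_form_even_odd graded_form_odd_even phi0_sym)
next
  fix x y assume "x \<in> A1" "y \<in> A1"
  then show "graded_form x y = - graded_form y x" by (simp add: graded_form_odd phi1_antisym[of x])
next
  fix x y z show "graded_form (mul x y) z = graded_form x (mul y z)" by (rule graded_form_assoc)
next
  fix x assume "\<forall>y. graded_form x y = 0"
  then show "x = 0" by (simp add: graded_form_nondegenerate)
next
  fix x y assume "x \<in> A0" "y \<in> A1"
  then show "graded_form x y = 0" by (rule graded_form_even_odd)
next
  fix x y assume "x \<in> A1" "y \<in> A0"
  then show "graded_form x y = 0" and "graded_form x y = graded_form y x"
    by (simp_all add: graded_form_even_odd graded_form_odd_even)
qed (simp_all add: graded_form_def phi0_bilinear phi1_bilinear even_part_add odd_part_add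
    even_part_scale odd_part_scale distrib_left)

end

theorem mainTheorem1:
  fixes scal :: "'k::field_char_0 \<Rightarrow> 'a::ab_group_add \<Rightarrow> 'a"
    and mul :: "'a \<Rightarrow> 'a \<Rightarrow> 'a"
    and A0 A1 :: "'a set"
  assumes "alg_closed TYPE('k)"
    and "fin_dim scal"
    and "assoc_superalgebra scal mul A0 A1"
  shows "(\<exists>B. even_symmetric_structure scal mul A0 A1 B) \<longleftrightarrow>
    (\<exists>phi0 phi1.
       bimodule_iso_to_dual scal mul A0 A0 phi0 \<and>
       bimodule_iso_to_dual scal mul A0 A1 phi1 \<and>
       (\<forall>x\<in>A0. \<forall>y\<in>A0. phi0 x y = phi0 y x) \<and>
       (\<forall>x\<in>A1. \<forall>y\<in>A1. phi1 x y = - phi1 y x) \<and>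
       (\<forall>x\<in>A0. \<forall>y\<in>A1. \<forall>z\<in>A1. phi1 (mul x y) z = phi0 x (mul y z)))"
    (is "_ \<longleftrightarrow> (\<exists>phi0 phi1. ?dualities phi0 phi1)")
proof
  interpret graded_product scal A0 A1 mul
    using assms(3) by (rule graded_product_if_assoc_superalgebra)
  show "\<exists>phi0 phi1. ?dualities phi0 phi1" if "\<exists>B. even_symmetric_structure scal mul A0 A1 B"
  proof -
    from that obtain B where "even_symmetric_structure scal mul A0 A1 B" ..
    then interpret even_symmetric_form scal A0 A1 mul B
      by (rule even_symmetric_form_if_even_symmetric_structure)
    have "?dualities B B"
      by (intro conjI ballI bimodule_iso_to_dual_form[OF assms(2)] form_even_sym
          form_odd_antisym form_assoc) simp_all
    then show ?thesis by blast
  qed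
  show "\<exists>B. even_symmetric_structure scal mul A0 A1 B" if "\<exists>phi0 phi1. ?dualities phi0 phi1"
  proof -
    from that obtain phi0 phi1 where "?dualities phi0 phi1" by blast
    then interpret compatible_dualities scal A0 A1 mul phi0 phi1
      by unfold_locales (elim conjE; meson)+
    show ?thesis using even_symmetric_structure_graded_form by blast
  qed
qed

end
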